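(* Let $b>0$ and let $f:[0,b]\to[0,\infty)$ be concave with $f(b)=0$, $f(0)>0$ and $\max_{[0,b]}f=f(0)$. Then $$\int_0^b\exp\left(-\frac{x^2+f(x)^2}{2}\right)\sqrt{1+f'(x)^2}\,dx\le\sqrt{\pi}.$$
   Context: Here $f'$ exists almost everywhere since $f$ is concave, and the integral is the (unnormalized) Gaussian length of the graph of $f$ over $[0,b]$. *)

theory Defs
  imports "HOL-Analysis.Analysis"
begin

end

theory Submission
  imports Defs "HOL-Probability.Distributions"
begin

text \<open>
  Put \<open>a = f 0\<close>, \<open>\<alpha> = b / (a + b)\<close>, \<open>\<beta> = a / (a + b)\<close> and
  \<open>X x = \<alpha> (a + x - f x)\<close>, \<open>Y x = \<beta> (b - x + f x)\<close>. The chord below the concave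
  graph, \<open>f x \<ge> a (1 - x / b)\<close>, gives \<open>0 \<le> X x \<le> x\<close> and \<open>0 \<le> Y x \<le> f x\<close>. Where
  \<open>f' \<le> 0\<close>, convexity of \<open>exp\<close> and \<open>sqrt (1 + f'\<^sup>2) \<le> 1 - f'\<close> bound the integrand by
  \<open>(1 - f') (\<alpha> exp (- X\<^sup>2 / 2\<alpha>) + \<beta> exp (- Y\<^sup>2 / 2\<beta>))\<close>, which is the derivative of the
  nondecreasing potential \<open>G\<^sub>\<alpha> (X x) - G\<^sub>\<beta> (Y x)\<close>, where \<open>G\<^sub>v u\<close> integrates
  \<open>exp (- s\<^sup>2 / 2v)\<close> over \<open>[0, u]\<close>. Since a concave function is differentiable off a
  countable set, and the integral of the almost-everywhere derivative of a monotone function is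
  at most its increment, the integral is bounded by
  \<open>G\<^sub>\<alpha> b + G\<^sub>\<beta> a \<le> sqrt (\<pi>\<alpha>/2) + sqrt (\<pi>\<beta>/2) \<le> sqrt \<pi>\<close>.
\<close>

definition chord_slope :: "(real \<Rightarrow> real) \<Rightarrow> real \<Rightarrow> real \<Rightarrow> real" where
  "chord_slope g x y = (g y - g x) / (y - x)"

lemma chord_slope_commute: "chord_slope g x y = chord_slope g y x"
  unfolding chord_slope_def by (metis minus_diff_eq minus_divide_divide)

lemma convex_on_chord_slope_le:
  assumes "convex_on I g" "x < y" "y < z" "x \<in> I" "z \<in> I"
  shows "chord_slope g x y \<le> chord_slope g x z" and "chord_slope g x z \<le> chord_slope g y z"
proof -
  have eq: "(g u - g v) / (u - v) = chord_slope g u v" for u v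
    unfolding chord_slope_def by (metis minus_diff_eq minus_divide_divide)
  show "chord_slope g x y \<le> chord_slope g x z" "chord_slope g x z \<le> chord_slope g y z"
    using convex_on_slope_le[OF assms(1,4,5,2,3)] by (simp_all only: eq)
qed

lemma convex_on_tendsto_right_chord_slope:
  assumes cvx: "convex_on {a..b} g" and x: "a < x" "x < b"
  shows "(chord_slope g x \<longlongrightarrow> (INF u\<in>{x<..b}. chord_slope g x u)) (at_right x)"
proof (rule order_tendstoI)
  let ?R = "INF u\<in>{x<..b}. chord_slope g x u"
  have "chord_slope g a x \<le> chord_slope g x u" if "u \<in> {x<..b}" for u
    using convex_on_chord_slope_le[OF cvx, of a x u] x that by fastforce
  then have bdd: "bdd_below (chord_slope g x ` {x<..b})" by (rule bdd_belowI2) auto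
  fix y assume "y < ?R"
  moreover have "?R \<le> chord_slope g x u" if "u \<in> {x<..b}" for u
    using bdd that by (rule cINF_lower)
  ultimately show "\<forall>\<^sub>F u in at_right x. y < chord_slope g x u"
    using x(2) by (intro eventually_at_rightI[of x b]) fastforce+
next
  let ?R = "INF u\<in>{x<..b}. chord_slope g x u"
  fix y assume "?R < y"
  then have "\<exists>u\<in>{x<..b}. chord_slope g x u < y"
    using cInf_lessD[of "chord_slope g x ` {x<..b}" y] x by auto
  then obtain u where u: "x < u" "u \<le> b" "chord_slope g x u < y" by auto
  show "\<forall>\<^sub>F t in at_right x. chord_slope g x t < y"
    using convex_on_chord_slope_le(1)[OF cvx, of x _ u] u x
    by (intro eventually_at_rightI[of x u]) fastforce+
qed

lemma convex_on_tendsto_left_chord_slope: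
  assumes cvx: "convex_on {a..b} g" and x: "a < x" "x < b"
  shows "(chord_slope g x \<longlongrightarrow> (SUP t\<in>{a..<x}. chord_slope g t x)) (at_left x)"
proof (rule order_tendstoI)
  let ?L = "SUP t\<in>{a..<x}. chord_slope g t x"
  have "chord_slope g t x \<le> chord_slope g x b" if "t \<in> {a..<x}" for t
    using convex_on_chord_slope_le[OF cvx, of t x b] x that by fastforce
  then have bdd: "bdd_above ((\<lambda>t. chord_slope g t x) ` {a..<x})" by (rule bdd_aboveI2) auto
  fix y assume "?L < y"
  have "chord_slope g x t < y" if "t \<in> {a<..<x}" for t
  proof -
    have "chord_slope g t x \<le> ?L"
      using that bdd by (intro cSUP_upper) auto
    then show ?thesis using \<open>?L < y\<close> chord_slope_commute[of g x t] by simp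
  qed
  then show "\<forall>\<^sub>F t in at_left x. chord_slope g x t < y"
    using x(1) by (intro eventually_at_leftI[of a x])
next
  let ?L = "SUP t\<in>{a..<x}. chord_slope g t x"
  fix y assume "y < ?L"
  then have "\<exists>t\<in>{a..<x}. y < chord_slope g t x"
    using less_cSupD[of "(\<lambda>t. chord_slope g t x) ` {a..<x}" y] x by auto
  then obtain t where t: "a \<le> t" "t < x" "y < chord_slope g t x" by auto
  have "y < chord_slope g x s" if "s \<in> {t<..<x}" for s
    using convex_on_chord_slope_le(2)[OF cvx, of t s x] chord_slope_commute[of g x s] t x that
    by fastforce
  then show "\<forall>\<^sub>F s in at_left x. y < chord_slope g x s"
    using t(2) by (intro eventually_at_leftI[of t x])
qed

lemma convex_on_differentiable_off_countable:
  fixes g :: "real \<Rightarrow> real"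
  assumes cvx: "convex_on {a..b} g"
  obtains C where "countable C" "\<And>x. x \<in> {a<..<b} - C \<Longrightarrow> g differentiable (at x)"
proof -
  define L where "L x = (SUP t\<in>{a..<x}. chord_slope g t x)" for x
  define R where "R x = (INF u\<in>{x<..b}. chord_slope g x u)" for x
  have lim_L: "(chord_slope g x \<longlongrightarrow> L x) (at_left x)"
   and lim_R: "(chord_slope g x \<longlongrightarrow> R x) (at_right x)" if "x \<in> {a<..<b}" for x
    using that convex_on_tendsto_left_chord_slope[OF cvx] convex_on_tendsto_right_chord_slope[OF cvx]
    by (auto simp: L_def R_def)
  have R_le_L: "R x \<le> L y" if "x \<in> {a<..<b}" "y \<in> {a<..<b}" "x < y" for x y
  proof -
    have "R x \<le> chord_slope g x y"
      using that convex_on_chord_slope_le(1)[OF cvx, of x _ y]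
      by (intro tendsto_upperbound[OF lim_R[OF that(1)]] eventually_at_rightI[of x y]) auto
    also have "\<dots> \<le> L y"
      using that convex_on_chord_slope_le(2)[OF cvx, of x _ y] chord_slope_commute[of g y]
      by (intro tendsto_lowerbound[OF lim_L[OF that(2)]] eventually_at_leftI[of x y]) auto
    finally show ?thesis .
  qed
  have L_le_R: "L x \<le> R x" if x: "x \<in> {a<..<b}" for x
  proof -
    have "L x \<le> chord_slope g x u" if u: "u \<in> {x<..<b}" for u
      using x u convex_on_chord_slope_le(1,2)[OF cvx, of _ x u] chord_slope_commute[of g x]
      by (intro tendsto_upperbound[OF lim_L[OF x]] eventually_at_leftI[of a x]) force+
    then show ?thesis
      using x by (intro tendsto_lowerbound[OF lim_R[OF x]] eventually_at_rightI[of x b]) auto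
  qed
  define C where "C = {x \<in> {a<..<b}. L x \<noteq> R x}"
  \<comment> \<open>The gaps \<open>]L x, R x[\<close> of distinct points of \<open>C\<close> are disjoint, so rationals
    inside them inject \<open>C\<close> into \<open>\<rat>\<close>.\<close>
  have "countable C"
  proof -
    have "\<forall>x\<in>C. \<exists>q\<in>\<rat>. L x < q \<and> q < R x"
      using L_le_R by (auto simp: C_def intro!: Rats_dense_in_real le_neq_trans)
    then obtain q where q: "\<And>x. x \<in> C \<Longrightarrow> q x \<in> \<rat> \<and> L x < q x \<and> q x < R x" by metis
    have "q x < q y" if "x \<in> C" "y \<in> C" "x < y" for x y
      using q[OF that(1)] q[OF that(2)] R_le_L[of x y] that by (force simp: C_def)
    then have "inj_on q C" by (metis inj_onI linorder_neq_iff order_less_irrefl)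
    moreover have "countable (q ` C)"
      using q by (intro countable_subset[OF _ countable_rat]) auto
    ultimately show ?thesis by (blast intro: countable_image_inj_on)
  qed
  moreover have "g differentiable (at x)" if "x \<in> {a<..<b} - C" for x
  proof -
    have "(chord_slope g x \<longlongrightarrow> R x) (at x)"
      using that lim_L[of x] lim_R[of x] by (intro filterlim_split_at) (auto simp: C_def)
    then have "(g has_real_derivative R x) (at x)"
      by (simp add: has_field_derivative_iff chord_slope_def[abs_def])
    then show ?thesis by (auto simp: real_differentiable_def)
  qed
  ultimately show ?thesis by (rule that)
qed

lemma integral_mono_increment_le:
  fixes \<psi> :: "real \<Rightarrow> real"
  assumes mono: "mono \<psi>" and h: "0 \<le> h" and ab: "a \<le> b"
  shows "integral {a..b} (\<lambda>x. \<psi> (x + h) - \<psi> x) \<le> h * (\<psi> (b + h) - \<psi> a)"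
proof -
  have int: "\<psi> integrable_on {c..d}" for c d
    using mono by (intro integrable_on_mono_on) (simp add: mono_on_def monoD)
  have int_shift: "(\<lambda>x. \<psi> (x + h)) integrable_on {a..b}"
    using mono by (intro integrable_on_mono_on) (simp add: mono_on_def monoD)
  have shift: "integral {a..b} (\<lambda>x. \<psi> (x + h)) = integral {a + h..b + h} \<psi>"
    using integral_shift_Icc_real[of a b \<psi> h] by (simp add: o_def add.commute)
  have split: "integral {a..b} \<psi> + integral {b..b + h} \<psi>
      = integral {a..a + h} \<psi> + integral {a + h..b + h} \<psi>"
    using Henstock_Kurzweil_Integration.integral_combine[where f=\<psi> and a=a and c=b and b="b + h"]
      Henstock_Kurzweil_Integration.integral_combine[where f=\<psi> and a=a and c="a + h" and b="b + h"] int h ab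
    by simp
  have "integral {b..b + h} \<psi> \<le> integral {b..b + h} (\<lambda>_. \<psi> (b + h))"
    using int by (intro integral_le) (auto intro: monoD[OF mono])
  moreover have "integral {a..a + h} (\<lambda>_. \<psi> a) \<le> integral {a..a + h} \<psi>"
    using int by (intro integral_le) (auto intro: monoD[OF mono])
  ultimately have "integral {b..b + h} \<psi> - integral {a..a + h} \<psi> \<le> h * (\<psi> (b + h) - \<psi> a)"
    using h by (simp add: algebra_simps)
  then show ?thesis
    using split by (simp add: integral_diff[OF int_shift int] shift)
qed

lemma nn_integral_difference_quotient_le:
  fixes \<psi> :: "real \<Rightarrow> real"
  assumes mono: "mono \<psi>" and h: "0 < h" and ab: "a \<le> b"
  shows "(\<integral>\<^sup>+x\<in>{a..b}. ennreal ((\<psi> (x + h) - \<psi> x) / h) \<partial>lborel) \<le> ennreal (\<psi> (b + h) - \<psi> a)"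
proof -
  define q where "q x = (\<psi> (x + h) - \<psi> x) / h" for x
  have q_nonneg: "0 \<le> q x" for x
    unfolding q_def using h monoD[OF mono, of x "x + h"] by simp
  have "(\<lambda>x. \<psi> (x + h) - \<psi> x) integrable_on {a..b}"
    using mono by (intro integrable_diff integrable_on_mono_on) (auto simp: mono_on_def monoD)
  then have "(q has_integral integral {a..b} q) {a..b}"
    unfolding q_def[abs_def] by (intro integrable_integral integrable_on_divide)
  then have "(\<integral>\<^sup>+x. ennreal (q x * indicator {a..b} x) \<partial>lborel) = ennreal (integral {a..b} q)"
    using nn_integral_has_integral_lebesgue[of "{a..b}" q] q_nonneg by (simp add: mult.commute)
  moreover have "(\<lambda>x. ennreal (q x * indicator {a..b} x)) = (\<lambda>x. ennreal (q x) * indicator {a..b} x)"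
    by (auto split: split_indicator)
  moreover have "integral {a..b} q \<le> \<psi> (b + h) - \<psi> a"
    unfolding q_def using integral_mono_increment_le[OF mono _ ab, of h] h
    by (simp add: pos_divide_le_eq mult.commute)
  ultimately show ?thesis
    by (simp add: q_def ennreal_leI)
qed

lemma has_real_derivative_imp_quotient_LIMSEQ:
  assumes "(\<phi> has_real_derivative D) (at x)" "h \<longlonglongrightarrow> 0" "\<And>n. h n \<noteq> 0"
  shows "(\<lambda>n. (\<phi> (x + h n) - \<phi> x) / h n) \<longlonglongrightarrow> D"
proof -
  have "((\<lambda>t. (\<phi> (x + t) - \<phi> x) / t) \<longlongrightarrow> D) (at 0)"
    using assms(1) by (simp add: DERIV_def)
  moreover have "filterlim h (at 0) sequentially"
    using assms(2,3) by (intro filterlim_atI) auto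
  ultimately show ?thesis by (rule filterlim_compose)
qed

lemma nn_integral_deriv_le_increment:
  fixes \<phi> \<phi>' :: "real \<Rightarrow> real"
  assumes ab: "a \<le> b" and mono: "mono_on {a..b} \<phi>"
    and deriv: "AE x in lborel. x \<in> {a<..<b} \<longrightarrow> (\<phi> has_real_derivative \<phi>' x) (at x)"
  shows "(\<integral>\<^sup>+x\<in>{a..b}. ennreal (\<phi>' x) \<partial>lborel) \<le> ennreal (\<phi> b - \<phi> a)"
proof -
  \<comment> \<open>Extending \<open>\<phi>\<close> by constants makes the forward difference quotients \<open>q n\<close> integrable
    over \<open>[a, b]\<close> with integral at most \<open>\<phi> b - \<phi> a\<close>; Fatou's lemma passes this to their limit.\<close>
  define \<psi> where "\<psi> x = \<phi> (max a (min b x))" for x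
  define h :: "nat \<Rightarrow> real" where "h n = inverse (Suc n)" for n
  define q where "q n x = (\<psi> (x + h n) - \<psi> x) / h n" for n x
  have mono_\<psi>: "mono \<psi>"
    unfolding \<psi>_def using ab by (intro monoI mono_onD[OF mono]) auto
  then have [measurable]: "\<psi> \<in> borel_measurable borel" by (rule borel_measurable_mono)
  have h_pos: "0 < h n" for n by (simp add: h_def)
  have q_bound: "(\<integral>\<^sup>+x\<in>{a..b}. ennreal (q n x) \<partial>lborel) \<le> ennreal (\<phi> b - \<phi> a)" for n
    using nn_integral_difference_quotient_le[OF mono_\<psi> h_pos[of n] ab] h_pos[of n] ab
    by (simp add: q_def \<psi>_def)
  have "AE x in lborel. x \<notin> {a, b}"
    by (intro AE_not_in countable_imp_null_set_lborel) auto
  then have "AE x in lborel. ennreal (\<phi>' x) * indicator {a..b} x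
      \<le> liminf (\<lambda>n. ennreal (q n x) * indicator {a..b} x)"
    using deriv
  proof eventually_elim
    case (elim x)
    show ?case
    proof (cases "x \<in> {a<..<b}")
      case True
      have "(\<phi> has_real_derivative \<phi>' x) (at x)"
        using elim True by blast
      moreover have "\<phi> y = \<psi> y" if "y \<in> {a<..<b}" for y
        using that by (simp add: \<psi>_def)
      ultimately have "(\<psi> has_real_derivative \<phi>' x) (at x)"
        by (rule has_field_derivative_transform_within_open[OF _ open_greaterThanLessThan True])
      moreover have "h \<longlonglongrightarrow> 0"
        unfolding h_def[abs_def] by (rule LIMSEQ_inverse_real_of_nat)
      ultimately have "(\<lambda>n. q n x) \<longlonglongrightarrow> \<phi>' x"
        unfolding q_def using h_pos
        by (intro has_real_derivative_imp_quotient_LIMSEQ) (auto simp: less_imp_neq[symmetric])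
      then have "(\<lambda>n. ennreal (q n x) * indicator {a..b} x) \<longlonglongrightarrow> ennreal (\<phi>' x) * indicator {a..b} x"
        using True by (simp add: tendsto_ennrealI)
      then show ?thesis by (simp add: lim_imp_Liminf)
    qed (use elim in auto)
  qed
  then have "(\<integral>\<^sup>+x\<in>{a..b}. ennreal (\<phi>' x) \<partial>lborel)
      \<le> (\<integral>\<^sup>+x. liminf (\<lambda>n. ennreal (q n x) * indicator {a..b} x) \<partial>lborel)"
    by (rule nn_integral_mono_AE)
  also have "\<dots> \<le> liminf (\<lambda>n. \<integral>\<^sup>+x\<in>{a..b}. ennreal (q n x) \<partial>lborel)"
    unfolding q_def by (intro nn_integral_liminf) measurable
  also have "\<dots> \<le> ennreal (\<phi> b - \<phi> a)"
    using q_bound by (intro Liminf_le) auto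
  finally show ?thesis .
qed

definition gauss_integral :: "real \<Rightarrow> real \<Rightarrow> real" where
  "gauss_integral v u = integral {0..u} (\<lambda>s. exp (- s\<^sup>2 / (2 * v)))"

lemma gauss_integral_0 [simp]: "gauss_integral v 0 = 0"
  by (simp add: gauss_integral_def)

lemma gauss_integral_has_real_derivative:
  assumes "0 < v" "0 < u"
  shows "(gauss_integral v has_real_derivative exp (- u\<^sup>2 / (2 * v))) (at u)"
proof -
  have "(gauss_integral v has_real_derivative exp (- u\<^sup>2 / (2 * v))) (at u within {0..u + 1})"
    unfolding gauss_integral_def[abs_def] using assms
    by (intro integral_has_real_derivative continuous_intros) auto
  moreover have "at u within {0..u + 1} = at u"
    using assms by (intro at_within_Icc_at) auto
  ultimately show ?thesis by simp
qed

lemma gauss_integral_mono: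
  assumes "0 < v" "0 \<le> u" "u \<le> w"
  shows "gauss_integral v u \<le> gauss_integral v w"
proof -
  have int: "(\<lambda>s. exp (- s\<^sup>2 / (2 * v))) integrable_on {0..w}"
    using assms(1) by (intro integrable_continuous_real continuous_intros) auto
  have "gauss_integral v w = gauss_integral v u + integral {u..w} (\<lambda>s. exp (- s\<^sup>2 / (2 * v)))"
    unfolding gauss_integral_def
    using Henstock_Kurzweil_Integration.integral_combine[OF assms(2,3) int] by simp
  moreover have "0 \<le> integral {u..w} (\<lambda>s. exp (- s\<^sup>2 / (2 * v)))"
    using assms(1) by (intro integral_nonneg integrable_continuous_real continuous_intros) auto
  ultimately show ?thesis by simp
qed

lemma integral_exp_minus_square_le:
  assumes "0 \<le> u"
  shows "integral {0..u} (\<lambda>s. exp (- s\<^sup>2)) \<le> sqrt pi / 2"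
proof -
  have int: "set_integrable lborel {0..u} (\<lambda>s. exp (- s\<^sup>2))"
    by (intro borel_integrable_atLeastAtMost' continuous_intros)
  have "integral {0..u} (\<lambda>s. exp (- s\<^sup>2)) = (\<integral>s. indicator {0..u} s * exp (- s\<^sup>2) \<partial>lborel)"
    using set_borel_integral_eq_integral(2)[OF int] by (simp add: set_lebesgue_integral_def)
  also have "\<dots> \<le> (\<integral>s. indicator {0..} s * exp (- s\<^sup>2) \<partial>lborel)"
  proof (rule integral_mono)
    show "integrable lborel (\<lambda>s. indicator {0..u} s * exp (- s\<^sup>2) :: real)"
      using int by (simp add: set_integrable_def)
    show "integrable lborel (\<lambda>s. indicator {0..} s * exp (- s\<^sup>2) :: real)"
      using gaussian_moment_0 by (simp add: has_bochner_integral_iff)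
  qed (auto split: split_indicator)
  also have "\<dots> = sqrt pi / 2"
    using gaussian_moment_0 by (simp add: has_bochner_integral_iff)
  finally show ?thesis .
qed

lemma gauss_integral_le:
  assumes v: "0 < v" and u: "0 \<le> u"
  shows "gauss_integral v u \<le> sqrt (pi * v / 2)"
proof -
  define \<sigma> where "\<sigma> = sqrt (2 * v)"
  have \<sigma>: "0 < \<sigma>" "\<sigma>\<^sup>2 = 2 * v" using v by (auto simp: \<sigma>_def)
  have "(\<lambda>x. x / (1 / \<sigma>)) ` {0..u / \<sigma>} = {0..u}"
    using image_mult_atLeastAtMost[OF \<sigma>(1), of 0 "u / \<sigma>"] \<sigma>(1) by (simp add: mult.commute)
  then have "gauss_integral v u = \<sigma> * integral {0..u / \<sigma>} (\<lambda>s. exp (- s\<^sup>2))"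
    using integral_stretch_real[where m="1 / \<sigma>" and f="\<lambda>s. exp (- s\<^sup>2)" and a=0 and b="u / \<sigma>"] \<sigma>
    by (simp add: gauss_integral_def power_divide)
  also have "\<dots> \<le> \<sigma> * (sqrt pi / 2)"
    using \<sigma>(1) u by (intro mult_left_mono integral_exp_minus_square_le) auto
  also have "\<dots> = sqrt (pi * v / 2)"
    using v by (simp add: \<sigma>_def real_sqrt_mult real_sqrt_divide field_simps)
  finally show ?thesis .
qed

lemma sqrt_add_sqrt_le_sqrt_double:
  assumes "0 \<le> p" "0 \<le> r"
  shows "sqrt p + sqrt r \<le> sqrt (2 * (p + r))"
proof (rule real_le_rsqrt)
  have "0 \<le> (sqrt p - sqrt r)\<^sup>2" by simp
  then show "(sqrt p + sqrt r)\<^sup>2 \<le> 2 * (p + r)"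
    using assms by (simp add: power2_eq_square algebra_simps)
qed

lemma exp_sqrt_le_split:
  fixes x y X Y D \<alpha> \<beta> :: real
  assumes "0 \<le> X" "X \<le> x" "0 \<le> Y" "Y \<le> y" "D \<le> 0" "0 < \<alpha>" "0 < \<beta>" "\<alpha> + \<beta> = 1"
  shows "exp (- (x\<^sup>2 + y\<^sup>2) / 2) * sqrt (1 + D\<^sup>2)
    \<le> (1 - D) * (\<alpha> * exp (- X\<^sup>2 / (2 * \<alpha>)) + \<beta> * exp (- Y\<^sup>2 / (2 * \<beta>)))"
proof -
  have sqrt_le: "sqrt (1 + D\<^sup>2) \<le> 1 - D"
    using assms(5) by (intro real_le_lsqrt) (auto simp: power2_eq_square algebra_simps)
  have "X\<^sup>2 \<le> x\<^sup>2" "Y\<^sup>2 \<le> y\<^sup>2"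
    using assms(1-4) by (auto intro: power_mono)
  then have exp_le: "exp (- (x\<^sup>2 + y\<^sup>2) / 2) \<le> exp (- (X\<^sup>2 + Y\<^sup>2) / 2)"
    by simp
  have convex_le: "exp (- (X\<^sup>2 + Y\<^sup>2) / 2) \<le> \<alpha> * exp (- X\<^sup>2 / (2 * \<alpha>)) + \<beta> * exp (- Y\<^sup>2 / (2 * \<beta>))"
  proof -
    have \<alpha>: "1 - \<beta> = \<alpha>" using assms(8) by simp
    have eq: "\<alpha> * (- X\<^sup>2 / (2 * \<alpha>)) + \<beta> * (- Y\<^sup>2 / (2 * \<beta>)) = - (X\<^sup>2 + Y\<^sup>2) / 2"
      using assms(6,7) by (simp add: field_simps)
    have "exp ((1 - \<beta>) *\<^sub>R (- X\<^sup>2 / (2 * \<alpha>)) + \<beta> *\<^sub>R (- Y\<^sup>2 / (2 * \<beta>)))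
        \<le> (1 - \<beta>) * exp (- X\<^sup>2 / (2 * \<alpha>)) + \<beta> * exp (- Y\<^sup>2 / (2 * \<beta>))"
      using assms(6-8) by (intro convex_onD[OF exp_convex]) auto
    then show ?thesis by (simp only: \<alpha> real_scaleR_def eq)
  qed
  have "exp (- (x\<^sup>2 + y\<^sup>2) / 2) * sqrt (1 + D\<^sup>2) \<le> exp (- (X\<^sup>2 + Y\<^sup>2) / 2) * (1 - D)"
    using exp_le sqrt_le by (rule mult_mono) auto
  also have "\<dots> \<le> (\<alpha> * exp (- X\<^sup>2 / (2 * \<alpha>)) + \<beta> * exp (- Y\<^sup>2 / (2 * \<beta>))) * (1 - D)"
    using convex_le assms(5) by (intro mult_right_mono) auto
  finally show ?thesis by (simp only: mult.commute)
qed

locale concave_profile =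
  fixes f :: "real \<Rightarrow> real" and b :: real
  assumes b_pos: "0 < b"
    and concave: "concave_on {0..b} f"
    and nonneg: "\<And>x. x \<in> {0..b} \<Longrightarrow> 0 \<le> f x"
    and f_b: "f b = 0"
    and f_0_pos: "0 < f 0"
    and le_f_0: "\<And>x. x \<in> {0..b} \<Longrightarrow> f x \<le> f 0"
begin

definition \<alpha> :: real where "\<alpha> = b / (f 0 + b)"
definition \<beta> :: real where "\<beta> = f 0 / (f 0 + b)"
definition X :: "real \<Rightarrow> real" where "X x = \<alpha> * (f 0 + x - f x)"
definition Y :: "real \<Rightarrow> real" where "Y x = \<beta> * (b - x + f x)"

definition potential :: "real \<Rightarrow> real" where
  "potential x = gauss_integral \<alpha> (X x) - gauss_integral \<beta> (Y x)"

definition potential' :: "real \<Rightarrow> real" where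
  "potential' x = (1 - deriv f x) * (\<alpha> * exp (- (X x)\<^sup>2 / (2 * \<alpha>)) + \<beta> * exp (- (Y x)\<^sup>2 / (2 * \<beta>)))"

lemma \<alpha>_pos: "0 < \<alpha>" and \<beta>_pos: "0 < \<beta>" and \<alpha>_add_\<beta>: "\<alpha> + \<beta> = 1"
proof -
  have "0 < f 0 + b" using b_pos f_0_pos by simp
  then show "0 < \<alpha>" "0 < \<beta>" "\<alpha> + \<beta> = 1"
    using b_pos f_0_pos by (simp_all add: \<alpha>_def \<beta>_def add_divide_distrib[symmetric])
qed

lemma f_antimono:
  assumes "0 \<le> x" "x \<le> y" "y \<le> b"
  shows "f y \<le> f x"
proof -
  have "concave_on {0..y} f"
    unfolding concave_on_def
    by (rule convex_on_subset[OF concave[unfolded concave_on_def]]) (use assms in auto)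
  then show ?thesis
    using concave_on_ge_min[of 0 y f x] le_f_0[of y] assms by (simp add: min.absorb2)
qed

lemma chord_le: "x \<in> {0..b} \<Longrightarrow> f 0 * (b - x) \<le> b * f x"
  using concave_onD_Icc'[OF concave, of x] b_pos f_b by (simp add: field_simps)

lemma X_nonneg: "x \<in> {0..b} \<Longrightarrow> 0 \<le> X x"
  using le_f_0[of x] \<alpha>_pos by (simp add: X_def)

lemma Y_nonneg: "x \<in> {0..b} \<Longrightarrow> 0 \<le> Y x"
  using nonneg[of x] \<beta>_pos by (simp add: Y_def)

lemma X_le: "x \<in> {0..b} \<Longrightarrow> X x \<le> x"
  using chord_le[of x] b_pos f_0_pos by (simp add: X_def \<alpha>_def field_simps)

lemma Y_le: "x \<in> {0..b} \<Longrightarrow> Y x \<le> f x"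
  using chord_le[of x] b_pos f_0_pos by (simp add: Y_def \<beta>_def field_simps)

lemma potential_mono: "mono_on {0..b} potential"
proof (rule mono_onI)
  fix x y assume xy: "x \<in> {0..b}" "y \<in> {0..b}" "x \<le> y"
  then have "X x \<le> X y" "Y y \<le> Y x"
    using f_antimono[of x y] \<alpha>_pos \<beta>_pos by (auto simp: X_def Y_def intro!: mult_left_mono)
  then show "potential x \<le> potential y"
    using xy X_nonneg Y_nonneg \<alpha>_pos \<beta>_pos
    by (auto simp: potential_def intro!: diff_mono gauss_integral_mono)
qed

lemma potential_increment_le: "potential b - potential 0 \<le> sqrt pi"
proof -
  have "X 0 = 0" "Y b = 0"
    using f_b by (simp_all add: X_def Y_def)
  moreover have "X b = b" "Y 0 = f 0"
    using b_pos f_0_pos f_b by (simp_all add: X_def Y_def \<alpha>_def \<beta>_def add.commute)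
  ultimately have "potential b - potential 0 = gauss_integral \<alpha> b + gauss_integral \<beta> (f 0)"
    by (simp add: potential_def)
  also have "\<dots> \<le> sqrt (pi * \<alpha> / 2) + sqrt (pi * \<beta> / 2)"
    using \<alpha>_pos \<beta>_pos b_pos f_0_pos by (intro add_mono gauss_integral_le) auto
  also have "\<dots> \<le> sqrt (2 * (pi * \<alpha> / 2 + pi * \<beta> / 2))"
    using \<alpha>_pos \<beta>_pos by (intro sqrt_add_sqrt_le_sqrt_double) auto
  also have "\<dots> = sqrt pi"
    using \<alpha>_add_\<beta> by (simp add: algebra_simps flip: distrib_left)
  finally show ?thesis .
qed

lemma AE_has_real_derivative:
  "AE x in lborel. x \<in> {0<..<b} \<longrightarrow> (f has_real_derivative deriv f x) (at x) \<and> deriv f x \<le> 0"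
proof -
  have "convex_on {0..b} (\<lambda>x. - f x)"
    using concave by (simp add: concave_on_def)
  then obtain C where C: "countable C"
    and diff: "\<And>x. x \<in> {0<..<b} - C \<Longrightarrow> (\<lambda>x. - f x) differentiable (at x)"
    by (rule convex_on_differentiable_off_countable) blast
  have off_C: "(f has_real_derivative deriv f x) (at x) \<and> deriv f x \<le> 0"
    if x: "x \<in> {0<..<b} - C" for x
  proof
    show deriv: "(f has_real_derivative deriv f x) (at x)"
      using diff[OF x] differentiable_minus[of "\<lambda>x. - f x"]
      by (simp add: DERIV_deriv_iff_real_differentiable)
    have "mono_on {0..b} (\<lambda>x. - f x)"
      using f_antimono by (auto intro: mono_onI)
    then show "deriv f x \<le> 0"
      using mono_on_imp_deriv_nonneg[OF _ DERIV_minus[OF deriv]] x by fastforce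
  qed
  have "AE x in lborel. x \<notin> C"
    using C by (intro AE_not_in countable_imp_null_set_lborel)
  then show ?thesis by eventually_elim (use off_C in auto)
qed

lemma potential_has_real_derivative:
  assumes x: "x \<in> {0<..<b}" and deriv: "(f has_real_derivative deriv f x) (at x)"
  shows "(potential has_real_derivative potential' x) (at x)"
proof -
  have "0 < X x" using le_f_0[of x] x \<alpha>_pos by (simp add: X_def)
  moreover have "(X has_real_derivative \<alpha> * (1 - deriv f x)) (at x)"
    unfolding X_def[abs_def] by (auto intro!: derivative_eq_intros deriv)
  ultimately have dX: "((\<lambda>z. gauss_integral \<alpha> (X z)) has_real_derivative
      exp (- (X x)\<^sup>2 / (2 * \<alpha>)) * (\<alpha> * (1 - deriv f x))) (at x)"
    by (rule DERIV_chain2[OF gauss_integral_has_real_derivative[OF \<alpha>_pos]])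
  have "0 < Y x" using nonneg[of x] x \<beta>_pos by (simp add: Y_def)
  moreover have "(Y has_real_derivative \<beta> * (deriv f x - 1)) (at x)"
    unfolding Y_def[abs_def] by (auto intro!: derivative_eq_intros deriv)
  ultimately have dY: "((\<lambda>z. gauss_integral \<beta> (Y z)) has_real_derivative
      exp (- (Y x)\<^sup>2 / (2 * \<beta>)) * (\<beta> * (deriv f x - 1))) (at x)"
    by (rule DERIV_chain2[OF gauss_integral_has_real_derivative[OF \<beta>_pos]])
  show ?thesis
    using DERIV_diff[OF dX dY] unfolding potential_def[abs_def]
    by (simp add: potential'_def algebra_simps)
qed

lemma integrand_le_potential':
  assumes "x \<in> {0..b}" "deriv f x \<le> 0"
  shows "exp (- (x\<^sup>2 + (f x)\<^sup>2) / 2) * sqrt (1 + (deriv f x)\<^sup>2) \<le> potential' x"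
  unfolding potential'_def using assms X_nonneg X_le Y_nonneg Y_le \<alpha>_pos \<beta>_pos \<alpha>_add_\<beta>
  by (intro exp_sqrt_le_split) auto

end

theorem mainTheorem13:
  fixes f :: "real \<Rightarrow> real" and b :: real
  assumes "b > 0"
    and "concave_on {0..b} f"
    and "\<forall>x\<in>{0..b}. f x \<ge> 0"
    and "f b = 0"
    and "f 0 > 0"
    and "\<forall>x\<in>{0..b}. f x \<le> f 0"
  shows "(\<integral>\<^sup>+ x \<in> {0..b}. ennreal (exp (- (x\<^sup>2 + (f x)\<^sup>2) / 2) * sqrt (1 + (deriv f x)\<^sup>2)) \<partial>lborel)
           \<le> ennreal (sqrt pi)"
proof -
  interpret concave_profile f b
    using assms by unfold_locales auto
  have "AE x in lborel. x \<notin> {0, b}"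
    by (intro AE_not_in countable_imp_null_set_lborel) auto
  with AE_has_real_derivative
  have "AE x in lborel. ennreal (exp (- (x\<^sup>2 + (f x)\<^sup>2) / 2) * sqrt (1 + (deriv f x)\<^sup>2)) * indicator {0..b} x
      \<le> ennreal (potential' x) * indicator {0..b} x"
    by eventually_elim (auto intro!: ennreal_leI integrand_le_potential'[simplified] split: split_indicator)
  then have "(\<integral>\<^sup>+ x \<in> {0..b}. ennreal (exp (- (x\<^sup>2 + (f x)\<^sup>2) / 2) * sqrt (1 + (deriv f x)\<^sup>2)) \<partial>lborel)
      \<le> (\<integral>\<^sup>+ x \<in> {0..b}. ennreal (potential' x) \<partial>lborel)"
    by (rule nn_integral_mono_AE)
  also have "\<dots> \<le> ennreal (potential b - potential 0)"
  proof (rule nn_integral_deriv_le_increment[OF _ potential_mono])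
    show "AE x in lborel. x \<in> {0<..<b} \<longrightarrow> (potential has_real_derivative potential' x) (at x)"
      using AE_has_real_derivative by eventually_elim (auto intro: potential_has_real_derivative)
  qed (use b_pos in simp)
  also have "\<dots> \<le> ennreal (sqrt pi)"
    using potential_increment_le by (rule ennreal_leI)
  finally show ?thesis .
qed

end
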